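(* Let $\lambda$ be a partition and let $k\geq 3$ be an integer. If $1\leq \ell(\lambda)\leq k-2$ and $\lambda\neq (1),(2),(1,1)$, then \[ \frac{s_\lambda(1^k)}{k}\geq \frac{s_\lambda(1^{k-1})}{k-1}+1. \]
   Context: $s_\lambda$ is the Schur polynomial of $\lambda$, and $s_\lambda(1^m)$ denotes its evaluation at $(1,\dots,1)$ with $m$ ones; equivalently, $s_\lambda(1^m)$ is the number of semistandard Young tableaux of shape $\lambda$ with entries in $\{1,\dots,m\}$ (rows weakly increasing left to right, columns strictly increasing top to bottom). $\ell(\lambda)$ is the number of nonzero parts of $\lambda$. *)

theory Defs
  imports Complex_Main
begin

definition is_partition :: "nat list \<Rightarrow> bool" where
  "is_partition lam \<longleftrightarrow> sorted_wrt (\<ge>) lam \<and> (\<forall>x\<in>set lam. 0 < x)"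

definition part_length :: "nat list \<Rightarrow> nat" where
  "part_length lam = length (filter (\<lambda>x. 0 < x) lam)"

text \<open>Young diagram (0-indexed cells (row, column)).\<close>
definition young_diagram :: "nat list \<Rightarrow> (nat \<times> nat) set" where
  "young_diagram lam = {(i, j). i < length lam \<and> j < lam ! i}"

definition ssyt :: "nat list \<Rightarrow> nat \<Rightarrow> ((nat \<times> nat) \<Rightarrow> nat) set" where
  "ssyt lam m = {T.
      (\<forall>c\<in>young_diagram lam. T c \<in> {1..m}) \<and>
      (\<forall>c. c \<notin> young_diagram lam \<longrightarrow> T c = 0) \<and>
      (\<forall>i j. (i, Suc j) \<in> young_diagram lam \<longrightarrow> T (i, j) \<le> T (i, Suc j)) \<and>
      (\<forall>i j. (Suc i, j) \<in> young_diagram lam \<longrightarrow> T (i, j) < T (Suc i, j))}"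

text \<open>s_lam(1^m) = number of SSYT of shape lam with entries in {1..m}.\<close>
definition schur_ones :: "nat list \<Rightarrow> nat \<Rightarrow> nat" where
  "schur_ones lam m = card (ssyt lam m)"

end

theory Submission
  imports Defs "HOL-Library.FuncSet"
begin

text \<open>Grouping the tableaux with entries in {1..m} by their set of entries, and relabelling that set
  order-preservingly onto {1..j}, gives s(1^m) = \<Sum>j C(m, j) e j, where e j
  (packed_ssyt_count) counts the tableaux whose set of entries is exactly {1..j}. Since C(k, j)/k
  - C(k-1, j)/(k-1) vanishes for j = 1 and equals C(k-2, j-2)/j for j \<ge> 2, and e 0 = 0, the
  difference of the two quotients is a sum of nonnegative terms. It remains to exhibit enough such
  tableaux: two with entries {1, 2} for a single row of length at least 3 or for two rows of
  different lengths; one with entries {1, 2} and one with entries {1, 2, 3} for two equal rows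
  (then k \<ge> 4); and, for l \<ge> 3 rows, the tableau whose row i is filled with i + 1, whose
  coefficient C(k-2, l-2)/l is at least 1 because l \<le> k - 2.\<close>

definition semistandard :: "nat list \<Rightarrow> ((nat \<times> nat) \<Rightarrow> nat) \<Rightarrow> bool" where
  "semistandard lam T \<longleftrightarrow>
      (\<forall>c. c \<notin> young_diagram lam \<longrightarrow> T c = 0) \<and>
      (\<forall>i j. (i, Suc j) \<in> young_diagram lam \<longrightarrow> T (i, j) \<le> T (i, Suc j)) \<and>
      (\<forall>i j. (Suc i, j) \<in> young_diagram lam \<longrightarrow> T (i, j) < T (Suc i, j))"

definition ssyt_content :: "nat list \<Rightarrow> nat set \<Rightarrow> ((nat \<times> nat) \<Rightarrow> nat) set" where
  "ssyt_content lam S = {T. semistandard lam T \<and> T ` young_diagram lam = S}"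

definition packed_ssyt_count :: "nat list \<Rightarrow> nat \<Rightarrow> nat" where
  "packed_ssyt_count lam j = card (ssyt_content lam {1..j})"

lemma ssyt_eq_semistandard: "ssyt lam m = {T. semistandard lam T \<and> T ` young_diagram lam \<subseteq> {1..m}}"
  unfolding ssyt_def semistandard_def by auto

lemma finite_young_diagram: "finite (young_diagram lam)"
proof -
  have "young_diagram lam = Sigma {..<length lam} (\<lambda>i. {..<lam ! i})"
    unfolding young_diagram_def by auto
  then show ?thesis by simp
qed

lemma finite_ssyt: "finite (ssyt lam m)"
proof -
  let ?D = "young_diagram lam"
  have "inj_on (\<lambda>T. restrict T ?D) (ssyt lam m)"
  proof (rule inj_onI)
    fix S T assume "S \<in> ssyt lam m" "T \<in> ssyt lam m" and eq: "restrict S ?D = restrict T ?D"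
    show "S = T"
    proof
      fix c
      show "S c = T c"
      proof (cases "c \<in> ?D")
        case True
        then show ?thesis using fun_cong[OF eq, of c] by simp
      next
        case False
        then show ?thesis using \<open>S \<in> ssyt lam m\<close> \<open>T \<in> ssyt lam m\<close>
          unfolding ssyt_def by (cases c) auto
      qed
    qed
  qed
  moreover have "(\<lambda>T. restrict T ?D) ` ssyt lam m \<subseteq> PiE ?D (\<lambda>_. {1..m})"
    unfolding ssyt_def by auto
  moreover have "finite (PiE ?D (\<lambda>_. {1..m}))"
    by (intro finite_PiE finite_young_diagram) auto
  ultimately show ?thesis
    by (metis finite_imageD finite_subset)
qed

lemma ssyt_content_subset_ssyt: "S \<subseteq> {1..m} \<Longrightarrow> ssyt_content lam S \<subseteq> ssyt lam m"
  unfolding ssyt_eq_semistandard ssyt_content_def by auto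

lemma finite_ssyt_content: "finite (ssyt_content lam {1..j})"
  using ssyt_content_subset_ssyt[of "{1..j}" j lam] finite_ssyt[of lam j] by (rule finite_subset) simp

lemma card_ssyt_eq_sum_content:
  "card (ssyt lam m) = (\<Sum>S\<in>Pow {1..m}. card (ssyt_content lam S))"
proof -
  have "ssyt lam m = (\<Union>S\<in>Pow {1..m}. ssyt_content lam S)"
    unfolding ssyt_eq_semistandard ssyt_content_def by auto
  also have "card \<dots> = (\<Sum>S\<in>Pow {1..m}. card (ssyt_content lam S))"
  proof (rule card_UN_disjoint)
    show "\<forall>S\<in>Pow {1..m}. finite (ssyt_content lam S)"
      using ssyt_content_subset_ssyt[of _ m lam] finite_ssyt[of lam m] by (auto intro: finite_subset)
    show "\<forall>S\<in>Pow {1..m}. \<forall>S'\<in>Pow {1..m}. S \<noteq> S' \<longrightarrow> ssyt_content lam S \<inter> ssyt_content lam S' = {}"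
      unfolding ssyt_content_def by auto
  qed simp
  finally show ?thesis .
qed

lemma ssyt_content_range: "T \<in> ssyt_content lam S \<Longrightarrow> T c \<in> insert 0 S"
  unfolding ssyt_content_def semistandard_def by (cases "c \<in> young_diagram lam"; cases c) auto

lemma semistandard_comp_iff:
  assumes g: "strict_mono_on A g" and "g 0 = 0" "0 \<in> A" and T: "range T \<subseteq> A"
  shows "semistandard lam (g \<circ> T) \<longleftrightarrow> semistandard lam T"
proof -
  have TA: "T c \<in> A" for c
    using T by auto
  have "g (T c) = 0 \<longleftrightarrow> T c = 0" for c
    using strict_mono_on_eq[OF g TA \<open>0 \<in> A\<close>] \<open>g 0 = 0\<close> by simp
  moreover have "g (T c) \<le> g (T d) \<longleftrightarrow> T c \<le> T d" "g (T c) < g (T d) \<longleftrightarrow> T c < T d" for c d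
    using strict_mono_on_less_eq[OF g TA TA] strict_mono_on_less[OF g TA TA] by auto
  ultimately show ?thesis
    unfolding semistandard_def by simp
qed

lemma comp_mem_ssyt_content:
  assumes g: "strict_mono_on A g" and g0: "g 0 = 0" and A0: "0 \<in> A"
    and T: "T \<in> ssyt_content lam S" and "S \<subseteq> A"
  shows "g \<circ> T \<in> ssyt_content lam (g ` S)"
proof -
  have "T c \<in> A" for c
    using ssyt_content_range[OF T, of c] A0 \<open>S \<subseteq> A\<close> by auto
  then have "range T \<subseteq> A"
    by auto
  then have "semistandard lam (g \<circ> T)"
    using T semistandard_comp_iff[OF g g0 A0] unfolding ssyt_content_def by simp
  moreover have "(g \<circ> T) ` young_diagram lam = g ` S"
    using T unfolding ssyt_content_def image_comp[symmetric] by simp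
  ultimately show ?thesis
    unfolding ssyt_content_def by simp
qed

lemma strict_mono_on_the_inv_into:
  fixes g :: "'a::linorder \<Rightarrow> 'b::linorder"
  assumes "strict_mono_on A g"
  shows "strict_mono_on (g ` A) (the_inv_into A g)"
  using assms strict_mono_on_imp_inj_on[OF assms]
  by (auto intro!: strict_mono_onI simp: the_inv_into_f_f strict_mono_on_less)

lemma card_ssyt_content_strict_mono_image:
  assumes g: "strict_mono_on A g" and g0: "g 0 = 0" and A0: "0 \<in> A"
  shows "card (ssyt_content lam (g ` (A - {0}))) = card (ssyt_content lam (A - {0}))"
proof -
  define h where "h = the_inv_into A g"
  have hg: "h (g x) = x" if "x \<in> A" for x
    using strict_mono_on_imp_inj_on[OF g] that by (simp add: h_def the_inv_into_f_f)
  have h: "strict_mono_on (g ` A) h" "h 0 = 0" "0 \<in> g ` A"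
    using strict_mono_on_the_inv_into[OF g] hg[OF A0] g0 A0 unfolding h_def by auto
  have "bij_betw (\<lambda>T. g \<circ> T) (ssyt_content lam (A - {0})) (ssyt_content lam (g ` (A - {0})))"
  proof (rule bij_betw_byWitness[where f' = "\<lambda>T. h \<circ> T"])
    show "\<forall>T\<in>ssyt_content lam (A - {0}). h \<circ> (g \<circ> T) = T"
    proof (intro ballI ext)
      fix T c assume "T \<in> ssyt_content lam (A - {0})"
      then show "(h \<circ> (g \<circ> T)) c = T c"
        using ssyt_content_range[of T lam "A - {0}" c] A0 by (auto simp: hg)
    qed
    show "\<forall>T\<in>ssyt_content lam (g ` (A - {0})). g \<circ> (h \<circ> T) = T"
    proof (intro ballI ext)
      fix T c assume "T \<in> ssyt_content lam (g ` (A - {0}))"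
      then show "(g \<circ> (h \<circ> T)) c = T c"
        using ssyt_content_range[of T lam "g ` (A - {0})" c] h(2) g0 by (auto simp: hg)
    qed
    show "(\<lambda>T. g \<circ> T) ` ssyt_content lam (A - {0}) \<subseteq> ssyt_content lam (g ` (A - {0}))"
      using comp_mem_ssyt_content[OF g g0 A0] by blast
    have "h ` g ` (A - {0}) = A - {0}"
      using hg by force
    then show "(\<lambda>T. h \<circ> T) ` ssyt_content lam (g ` (A - {0})) \<subseteq> ssyt_content lam (A - {0})"
      using comp_mem_ssyt_content[OF h] by (metis Diff_subset image_mono image_subsetI)
  qed
  then show ?thesis
    by (metis bij_betw_same_card)
qed

lemma strict_mono_on_nth: "sorted_wrt (<) xs \<Longrightarrow> strict_mono_on {..<length xs} ((!) xs)"
  by (auto intro: strict_mono_onI sorted_wrt_nth_less)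

lemma card_ssyt_content:
  assumes "finite S" "0 \<notin> S"
  shows "card (ssyt_content lam S) = card (ssyt_content lam {1..card S})"
proof -
  define xs where "xs = sorted_list_of_set (insert 0 S)"
  have "sorted_wrt (<) xs" "set xs = insert 0 S" "length xs = Suc (card S)"
    using assms strict_sorted_list_of_set[of "insert 0 S"] unfolding xs_def
    by (simp_all only: set_sorted_list_of_set length_sorted_list_of_set finite_insert)
      (simp add: card_insert_disjoint)
  moreover have A: "{..<Suc (card S)} = {0..card S}"
    by auto
  ultimately have g: "strict_mono_on {0..card S} ((!) xs)"
    and image: "(!) xs ` {0..card S} = insert 0 S"
    using strict_mono_on_nth[of xs] nth_image[of "length xs" xs] by (simp_all add: atLeast0LessThan)
  then obtain i where i: "i \<in> {0..card S}" "xs ! i = 0"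
    by (metis imageE insertI1)
  have g0: "xs ! 0 = 0"
    using strict_mono_on_leD[OF g _ i(1)] i by simp
  have "(!) xs ` ({0..card S} - {0}) = S"
    using image g0 strict_mono_on_imp_inj_on[OF g] assms(2)
    by (simp add: inj_on_image_set_diff)
  moreover have "{0..card S} - {0} = {1..card S}"
    by auto
  ultimately show ?thesis
    using card_ssyt_content_strict_mono_image[OF g g0] by simp
qed

lemma sum_Pow_card:
  fixes f :: "nat \<Rightarrow> nat"
  assumes "finite A"
  shows "(\<Sum>S\<in>Pow A. f (card S)) = (\<Sum>j\<le>card A. (card A choose j) * f j)"
proof -
  have "Pow A = (\<Union>j\<le>card A. {S. S \<subseteq> A \<and> card S = j})"
    using assms by (auto intro: card_mono)
  then have "(\<Sum>S\<in>Pow A. f (card S)) = (\<Sum>j\<le>card A. \<Sum>S\<in>{S. S \<subseteq> A \<and> card S = j}. f (card S))"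
    using assms by (simp only:) (rule sum.UNION_disjoint, auto)
  also have "\<dots> = (\<Sum>j\<le>card A. (card A choose j) * f j)"
  proof (rule sum.cong)
    fix j
    have "(\<Sum>S\<in>{S. S \<subseteq> A \<and> card S = j}. f (card S)) = (\<Sum>S\<in>{S. S \<subseteq> A \<and> card S = j}. f j)"
      by (rule sum.cong) auto
    then show "(\<Sum>S\<in>{S. S \<subseteq> A \<and> card S = j}. f (card S)) = (card A choose j) * f j"
      using n_subsets[OF assms, of j] by simp
  qed simp
  finally show ?thesis .
qed

lemma schur_ones_eq_sum_packed:
  "schur_ones lam m = (\<Sum>j\<le>m. (m choose j) * packed_ssyt_count lam j)"
proof -
  have "schur_ones lam m = (\<Sum>S\<in>Pow {1..m}. card (ssyt_content lam S))"
    unfolding schur_ones_def by (rule card_ssyt_eq_sum_content)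
  also have "\<dots> = (\<Sum>S\<in>Pow {1..m}. packed_ssyt_count lam (card S))"
    unfolding packed_ssyt_count_def
    by (intro sum.cong refl card_ssyt_content) (auto intro: finite_subset)
  also have "\<dots> = (\<Sum>j\<le>m. (m choose j) * packed_ssyt_count lam j)"
    using sum_Pow_card[of "{1..m}"] by simp
  finally show ?thesis .
qed

definition quot_diff_coeff :: "nat \<Rightarrow> nat \<Rightarrow> real" where
  "quot_diff_coeff k j = real (k choose j) / real k - real ((k - 1) choose j) / real (k - 1)"

lemma binomial_div_self:
  assumes "1 \<le> n" "1 \<le> j"
  shows "real (n choose j) / real n = real ((n - 1) choose (j - 1)) / real j"
proof -
  obtain m i where "n = Suc m" "j = Suc i"
    using assms by (metis Suc_le_D One_nat_def)
  moreover have "real (Suc m) * real (m choose i) = real (Suc m choose Suc i) * real (Suc i)"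
    using Suc_times_binomial_eq[of m i] by (metis of_nat_mult)
  ultimately show ?thesis
    by (simp add: field_simps del: binomial_Suc_Suc of_nat_Suc)
qed

lemma quot_diff_coeff_ge_two:
  assumes "2 \<le> k" "2 \<le> j"
  shows "quot_diff_coeff k j = real ((k - 2) choose (j - 2)) / real j"
proof -
  obtain n r where k: "k = Suc (Suc n)" and j: "j = Suc (Suc r)"
    using assms by (metis add_2_eq_Suc le_Suc_ex)
  have "quot_diff_coeff k j = real (Suc n choose Suc r) / real j - real (n choose Suc r) / real j"
    unfolding quot_diff_coeff_def using binomial_div_self[of k j] binomial_div_self[of "k - 1" j] k j
    by simp
  also have "\<dots> = real (n choose r) / real j"
    by (simp add: diff_divide_distrib[symmetric])
  finally show ?thesis
    using k j by simp
qed

lemma quot_diff_coeff_one: "2 \<le> k \<Longrightarrow> quot_diff_coeff k 1 = 0"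
  unfolding quot_diff_coeff_def by simp

lemma quot_diff_coeff_nonneg:
  assumes "2 \<le> k" "1 \<le> j"
  shows "0 \<le> quot_diff_coeff k j"
proof (cases "j = 1")
  case True
  then show ?thesis
    using quot_diff_coeff_one[OF assms(1)] by simp
next
  case False
  then show ?thesis
    using assms quot_diff_coeff_ge_two[of k j] by simp
qed

lemma quot_diff_binomial_sum:
  fixes e :: "nat \<Rightarrow> nat"
  assumes "2 \<le> k"
  shows "real (\<Sum>j\<le>k. (k choose j) * e j) / real k - real (\<Sum>j\<le>k - 1. (k - 1 choose j) * e j) / real (k - 1)
    = (\<Sum>j\<le>k. real (e j) * quot_diff_coeff k j)"
proof -
  have "(\<Sum>j\<le>k - 1. (k - 1 choose j) * e j) = (\<Sum>j\<le>k. (k - 1 choose j) * e j)"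
    using assms sum.atMost_Suc[of "\<lambda>j. (k - 1 choose j) * e j" "k - 1"] by simp
  then show ?thesis
    unfolding quot_diff_coeff_def
    by (simp add: sum_divide_distrib sum_subtractf[symmetric] field_simps)
qed

lemma self_le_binomial:
  assumes "1 \<le> r" "r < n"
  shows "n \<le> n choose r"
proof (cases "2 * r \<le> n")
  case True
  then have "n choose 1 \<le> n choose r"
    using assms by (intro binomial_mono) auto
  then show ?thesis by simp
next
  case False
  then have "n choose (n - 1) \<le> n choose r"
    using assms by (intro binomial_antimono) auto
  moreover have "n choose (n - 1) = n"
    using assms binomial_symmetric[of 1 n] by simp
  ultimately show ?thesis by simp
qed

lemma one_le_quot_diff_coeff:
  assumes "3 \<le> l" "l + 2 \<le> k"
  shows "1 \<le> quot_diff_coeff k l"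
proof -
  have "k - 2 \<le> (k - 2) choose (l - 2)"
    using assms by (intro self_le_binomial) auto
  then have "l \<le> (k - 2) choose (l - 2)"
    using assms by linarith
  then show ?thesis
    using assms by (simp add: quot_diff_coeff_ge_two)
qed

lemma one_le_quot_diff_sum:
  fixes e :: "nat \<Rightarrow> nat"
  assumes k: "3 \<le> k" and "e 0 = 0"
    and "2 \<le> e 2 \<or> (1 \<le> e 2 \<and> 1 \<le> e 3 \<and> 4 \<le> k) \<or> (\<exists>l. 3 \<le> l \<and> l + 2 \<le> k \<and> 1 \<le> e l)"
  shows "1 \<le> (\<Sum>j\<le>k. real (e j) * quot_diff_coeff k j)"
proof -
  have "0 \<le> real (e j) * quot_diff_coeff k j" for j
    using k \<open>e 0 = 0\<close> by (cases "j = 0") (simp_all add: quot_diff_coeff_nonneg)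
  then have partial_sum: "(\<Sum>j\<in>J. real (e j) * quot_diff_coeff k j) \<le> (\<Sum>j\<le>k. real (e j) * quot_diff_coeff k j)"
    if "J \<subseteq> {..k}" for J
    using that by (intro sum_mono2) auto
  have c2: "quot_diff_coeff k 2 = 1 / 2" and c3: "quot_diff_coeff k 3 = real (k - 2) / 3"
    using k by (simp_all add: quot_diff_coeff_ge_two)
  from assms(3) show ?thesis
  proof (elim disjE conjE exE)
    assume "2 \<le> e 2"
    then show ?thesis
      using partial_sum[of "{2}"] k c2 by simp
  next
    assume "1 \<le> e 2" "1 \<le> e 3" "4 \<le> k"
    moreover have "2 / 3 \<le> quot_diff_coeff k 3"
      using \<open>4 \<le> k\<close> c3 by simp
    then have "2 / 3 \<le> real (e 3) * quot_diff_coeff k 3"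
      using \<open>1 \<le> e 3\<close> mult_mono[of 1 "real (e 3)" "2 / 3" "quot_diff_coeff k 3"] by simp
    moreover have "1 / 2 \<le> real (e 2) * quot_diff_coeff k 2"
      using \<open>1 \<le> e 2\<close> unfolding c2 by simp
    ultimately have "1 \<le> real (e 2) * quot_diff_coeff k 2 + real (e 3) * quot_diff_coeff k 3"
      by linarith
    then show ?thesis
      using partial_sum[of "{2, 3}"] k by simp
  next
    fix l assume "3 \<le> l" "l + 2 \<le> k" "1 \<le> e l"
    then have "1 \<le> real (e l) * quot_diff_coeff k l"
      using one_le_quot_diff_coeff mult_mono[of 1 "real (e l)" 1 "quot_diff_coeff k l"] by simp
    then show ?thesis
      using partial_sum[of "{l}"] \<open>l + 2 \<le> k\<close> by simp
  qed
qed

lemma part_length_eq_length: "is_partition lam \<Longrightarrow> part_length lam = length lam"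
  unfolding is_partition_def part_length_def by (simp add: filter_id_conv)

lemma young_diagram_one_row: "young_diagram [a] = {(i, j). i = 0 \<and> j < a}"
  unfolding young_diagram_def by auto

lemma young_diagram_two_rows:
  "young_diagram [a, b] = {(i, j). (i = 0 \<and> j < a) \<or> (i = 1 \<and> j < b)}"
  unfolding young_diagram_def by (auto simp: less_Suc_eq nth_Cons')

lemma packed_ssyt_count_zero:
  assumes "is_partition lam" "lam \<noteq> []"
  shows "packed_ssyt_count lam 0 = 0"
proof -
  have "(0, 0) \<in> young_diagram lam"
    using assms unfolding is_partition_def young_diagram_def by (cases lam) auto
  then have "ssyt_content lam {1..0} = {}"
    unfolding ssyt_content_def by auto
  then show ?thesis
    unfolding packed_ssyt_count_def by simp
qed

lemma one_le_packed_ssyt_count: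
  "T \<in> ssyt_content lam {1..j} \<Longrightarrow> 1 \<le> packed_ssyt_count lam j"
  unfolding packed_ssyt_count_def using finite_ssyt_content
  by (metis card_0_eq empty_iff less_one not_le)

lemma two_le_packed_ssyt_count:
  assumes "T \<in> ssyt_content lam {1..j}" "T' \<in> ssyt_content lam {1..j}" "T \<noteq> T'"
  shows "2 \<le> packed_ssyt_count lam j"
proof -
  have "card {T, T'} \<le> card (ssyt_content lam {1..j})"
    using assms finite_ssyt_content by (intro card_mono) auto
  then show ?thesis
    using assms unfolding packed_ssyt_count_def by simp
qed

lemma row_index_mem_ssyt_content:
  assumes "is_partition lam"
  shows "(\<lambda>c. if c \<in> young_diagram lam then fst c + 1 else 0) \<in> ssyt_content lam {1..length lam}"
    (is "?R \<in> _")
proof -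
  let ?D = "young_diagram lam"
  have sorted: "sorted_wrt (\<ge>) lam" and pos: "\<forall>x\<in>set lam. 0 < x"
    using assms unfolding is_partition_def by auto
  have column: "(i, j) \<in> ?D" if "(Suc i, j) \<in> ?D" for i j
  proof -
    have "lam ! Suc i \<le> lam ! i"
      using that sorted_wrt_nth_less[OF sorted, of i "Suc i"] unfolding young_diagram_def by simp
    then show ?thesis
      using that unfolding young_diagram_def by auto
  qed
  have row: "(i, j) \<in> ?D" if "(i, Suc j) \<in> ?D" for i j
    using that unfolding young_diagram_def by auto
  have "semistandard lam ?R"
    unfolding semistandard_def
  proof (intro conjI allI impI)
    show "?R c = 0" if "c \<notin> ?D" for c
      using that by simp
    show "?R (i, j) \<le> ?R (i, Suc j)" if "(i, Suc j) \<in> ?D" for i j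
      using that row[OF that] by simp
    show "?R (i, j) < ?R (Suc i, j)" if "(Suc i, j) \<in> ?D" for i j
      using that column[OF that] by simp
  qed
  moreover have "?R ` ?D = {1..length lam}"
  proof
    show "?R ` ?D \<subseteq> {1..length lam}"
      unfolding young_diagram_def by auto
    show "{1..length lam} \<subseteq> ?R ` ?D"
    proof
      fix v assume v: "v \<in> {1..length lam}"
      then have "(v - 1, 0) \<in> ?D"
        using pos unfolding young_diagram_def by auto
      then show "v \<in> ?R ` ?D"
        using v by (intro rev_image_eqI[of "(v - 1, 0)"]) auto
    qed
  qed
  ultimately show ?thesis
    unfolding ssyt_content_def by simp
qed

lemma two_le_packed_ssyt_count_one_row:
  assumes "3 \<le> a"
  shows "2 \<le> packed_ssyt_count [a] 2"
proof (rule two_le_packed_ssyt_count)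
  let ?T = "\<lambda>m (i, j). if i = 0 \<and> j < a then if a - m \<le> j then 2 else 1 else 0 :: nat"
  have "?T m \<in> ssyt_content [a] {1..2}" if "m \<in> {1, 2}" for m
  proof -
    have "semistandard [a] (?T m)"
      unfolding semistandard_def young_diagram_one_row by auto
    moreover have "?T m ` young_diagram [a] = {1..2}"
    proof
      show "?T m ` young_diagram [a] \<subseteq> {1..2}"
        unfolding young_diagram_one_row by auto
      have "1 \<in> ?T m ` young_diagram [a]"
        using assms that by (intro rev_image_eqI[of "(0, 0)"]) (auto simp: young_diagram_one_row)
      moreover have "2 \<in> ?T m ` young_diagram [a]"
        using assms that by (intro rev_image_eqI[of "(0, a - 1)"]) (auto simp: young_diagram_one_row)
      moreover have "{1..2} = {1, 2::nat}"
        by auto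
      ultimately show "{1..2} \<subseteq> ?T m ` young_diagram [a]"
        by (simp only: insert_subset empty_subsetI)
    qed
    ultimately show ?thesis
      unfolding ssyt_content_def by simp
  qed
  then show "?T 1 \<in> ssyt_content [a] {1..2}" "?T 2 \<in> ssyt_content [a] {1..2}"
    by auto
  have "?T 1 (0, a - 2) \<noteq> ?T 2 (0, a - 2)"
    using assms by simp
  then show "?T 1 \<noteq> ?T 2"
    by (rule contrapos_nn) (erule fun_cong)
qed

lemma two_le_packed_ssyt_count_two_rows:
  assumes "1 \<le> b" "b < a"
  shows "2 \<le> packed_ssyt_count [a, b] 2"
proof (rule two_le_packed_ssyt_count)
  let ?T = "\<lambda>m (i, j). if (i = 0 \<and> j < a) \<or> (i = 1 \<and> j < b) then if i = 0 \<and> j < a - m then 1 else 2 else 0 :: nat"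
  have "?T m \<in> ssyt_content [a, b] {1..2}" if "m \<in> {0, 1}" for m
  proof -
    have "semistandard [a, b] (?T m)"
      using assms that unfolding semistandard_def young_diagram_two_rows by auto
    moreover have "?T m ` young_diagram [a, b] = {1..2}"
    proof
      show "?T m ` young_diagram [a, b] \<subseteq> {1..2}"
        unfolding young_diagram_two_rows by auto
      have "1 \<in> ?T m ` young_diagram [a, b]"
        using assms that by (intro rev_image_eqI[of "(0, 0)"]) (auto simp: young_diagram_two_rows)
      moreover have "2 \<in> ?T m ` young_diagram [a, b]"
        using assms that by (intro rev_image_eqI[of "(1, 0)"]) (auto simp: young_diagram_two_rows)
      moreover have "{1..2} = {1, 2::nat}"
        by auto
      ultimately show "{1..2} \<subseteq> ?T m ` young_diagram [a, b]"
        by (simp only: insert_subset empty_subsetI)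
    qed
    ultimately show ?thesis
      unfolding ssyt_content_def by simp
  qed
  then show "?T 0 \<in> ssyt_content [a, b] {1..2}" "?T 1 \<in> ssyt_content [a, b] {1..2}"
    by auto
  have "?T 0 (0, a - 1) \<noteq> ?T 1 (0, a - 1)"
    using assms by simp
  then show "?T 0 \<noteq> ?T 1"
    by (rule contrapos_nn) (erule fun_cong)
qed

lemma one_le_packed_ssyt_count_square:
  assumes "2 \<le> a"
  shows "1 \<le> packed_ssyt_count [a, a] 3"
proof (rule one_le_packed_ssyt_count)
  let ?T = "\<lambda>(i, j). if (i = 0 \<or> i = 1) \<and> j < a then if i = 1 \<and> j = a - 1 then 3 else i + 1 else 0 :: nat"
  have "semistandard [a, a] ?T"
    using assms unfolding semistandard_def young_diagram_two_rows by auto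
  moreover have "?T ` young_diagram [a, a] = {1..3}"
  proof
    show "?T ` young_diagram [a, a] \<subseteq> {1..3}"
      unfolding young_diagram_two_rows by auto
    have "1 \<in> ?T ` young_diagram [a, a]"
      using assms by (intro rev_image_eqI[of "(0, 0)"]) (auto simp: young_diagram_two_rows)
    moreover have "2 \<in> ?T ` young_diagram [a, a]"
      using assms by (intro rev_image_eqI[of "(1, 0)"]) (auto simp: young_diagram_two_rows)
    moreover have "3 \<in> ?T ` young_diagram [a, a]"
      using assms by (intro rev_image_eqI[of "(1, a - 1)"]) (auto simp: young_diagram_two_rows)
    moreover have "{1..3} = {1, 2, 3::nat}"
      by auto
    ultimately show "{1..3} \<subseteq> ?T ` young_diagram [a, a]"
      by (simp only: insert_subset empty_subsetI)
  qed
  ultimately show "?T \<in> ssyt_content [a, a] {1..3}"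
    unfolding ssyt_content_def by simp
qed
lemma packed_ssyt_count_alternatives:
  assumes lam: "is_partition lam" "lam \<noteq> []" and k: "length lam + 2 \<le> k"
    and "lam \<noteq> [1]" "lam \<noteq> [2]" "lam \<noteq> [1, 1]"
  shows "2 \<le> packed_ssyt_count lam 2
    \<or> (1 \<le> packed_ssyt_count lam 2 \<and> 1 \<le> packed_ssyt_count lam 3 \<and> 4 \<le> k)
    \<or> (\<exists>l. 3 \<le> l \<and> l + 2 \<le> k \<and> 1 \<le> packed_ssyt_count lam l)"
proof -
  have sorted: "sorted_wrt (\<ge>) lam" and pos: "\<forall>x\<in>set lam. 0 < x"
    using lam(1) unfolding is_partition_def by auto
  have rows: "1 \<le> packed_ssyt_count lam (length lam)"
    using one_le_packed_ssyt_count[OF row_index_mem_ssyt_content[OF lam(1)]] .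
  consider a where "lam = [a]" | a b where "lam = [a, b]" | "3 \<le> length lam"
  proof -
    obtain a rest where "lam = a # rest"
      using lam(2) by (cases lam) auto
    then show ?thesis
      using that by (cases rest rule: remdups_adj.cases) auto
  qed
  then show ?thesis
  proof cases
    case (1 a)
    then have "3 \<le> a"
      using pos assms(4,5) by auto
    then show ?thesis
      using 1 two_le_packed_ssyt_count_one_row by simp
  next
    case (2 a b)
    then have "1 \<le> b" "b \<le> a"
      using pos sorted by auto
    show ?thesis
    proof (cases "b < a")
      case True
      then show ?thesis
        using 2 \<open>1 \<le> b\<close> two_le_packed_ssyt_count_two_rows by simp
    next
      case False
      then have "2 \<le> a" "a = b"
        using 2 \<open>1 \<le> b\<close> \<open>b \<le> a\<close> assms(6) by auto
      moreover have "1 \<le> packed_ssyt_count lam 2"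
        using rows 2 by (metis One_nat_def Suc_1 length_Cons list.size(3))
      ultimately show ?thesis
        using 2 k one_le_packed_ssyt_count_square by auto
    qed
  next
    case 3
    then show ?thesis
      using rows k by auto
  qed
qed

theorem lemma4p4:
  fixes lam :: "nat list" and k :: nat
  assumes "is_partition lam"
    and "k \<ge> 3"
    and "1 \<le> part_length lam" and "part_length lam \<le> k - 2"
    and "lam \<noteq> [1]" and "lam \<noteq> [2]" and "lam \<noteq> [1, 1]"
  shows "real (schur_ones lam k) / real k \<ge> real (schur_ones lam (k - 1)) / real (k - 1) + 1"
proof -
  let ?e = "packed_ssyt_count lam"
  have length: "lam \<noteq> []" "length lam + 2 \<le> k"
    using assms(2-4) part_length_eq_length[OF assms(1)] by auto
  have "real (schur_ones lam k) / real k - real (schur_ones lam (k - 1)) / real (k - 1)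
      = (\<Sum>j\<le>k. real (?e j) * quot_diff_coeff k j)"
    using quot_diff_binomial_sum[of k ?e] assms(2) by (simp add: schur_ones_eq_sum_packed)
  moreover have "1 \<le> (\<Sum>j\<le>k. real (?e j) * quot_diff_coeff k j)"
    using one_le_quot_diff_sum[OF assms(2) packed_ssyt_count_zero[OF assms(1) length(1)]
        packed_ssyt_count_alternatives[OF assms(1) length assms(5-7)]] .
  ultimately show ?thesis
    by simp
qed

end
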